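(* Let $n\ge 1$. For every $\phi\in\mathcal{B}_n$ with $\phi\neq 1$ there exist $i\in\{1,\dots,n-1\}$ and $\epsilon\in\{1,-1\}$ such that $\|\sigma_i^{\epsilon}\phi\|\le\|\phi\|-2$. Consequently $\mathcal{B}_n$ is generated by $\sigma_1,\dots,\sigma_{n-1}$.
   Context: $\Sigma_{0,1,n}$ is the free group with free basis $t_1,\dots,t_n$, and $z_1:=(t_1t_2\cdots t_n)^{-1}$. Notation: $\overline a:=a^{-1}$, $a^b:=b^{-1}ab$, and $[a]$ denotes the conjugacy class of $a$. Automorphisms act on the right and are written as exponents; they compose left to right, i.e. $w^{\phi\psi}=(w^\phi)^\psi$. $\mathcal{B}_n$ is the group of all automorphisms $\phi$ of $\Sigma_{0,1,n}$ such that $z_1^\phi=z_1$ and $\phi$ permutes the set of conjugacy classes $\{[t_1],\dots,[t_n]\}$. For $i\in\{1,\dots,n-1\}$, $\sigma_i\in\mathcal{B}_n$ is the automorphism given by $t_k^{\sigma_i}=t_k$ for $k\notin\{i,i+1\}$, $t_i^{\sigma_i}=t_{i+1}$, and $t_{i+1}^{\sigma_i}=\overline t_{i+1}t_it_{i+1}$. For $w\in\Sigma_{0,1,n}$, $|w|$ is the length of the reduced word in $t_1^{\pm1},\dots,t_n^{\pm1}$ representing $w$. For $\phi\in\mathcal{B}_n$, $\|\phi\|:=\sum_{i=1}^n|t_i^\phi|$. *)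

theory Defs
  imports Main
begin

(* Letters of the free group Sigma_{0,1,n}: (i, True) is t_i, (i, False) is t_i^{-1}.
   Generators are indexed 1..n.  Elements are represented by freely reduced words. *)
type_synonym letter = "nat \<times> bool"
type_synonym word = "letter list"

definition linv :: "letter \<Rightarrow> letter" where
  "linv x = (fst x, \<not> snd x)"

fun red :: "word \<Rightarrow> word" where
  "red [] = []"
| "red (x # xs) = (case red xs of [] \<Rightarrow> [x]
                     | y # ys \<Rightarrow> (if y = linv x then ys else x # y # ys))"

fun reduced :: "word \<Rightarrow> bool" where
  "reduced [] = True"
| "reduced [x] = True"
| "reduced (x # y # ys) = (y \<noteq> linv x \<and> reduced (y # ys))"

definition Sigma :: "nat \<Rightarrow> word set" where
  "Sigma n = {w. reduced w \<and> (\<forall>x\<in>set w. 1 \<le> fst x \<and> fst x \<le> n)}"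

definition winv :: "word \<Rightarrow> word" where
  "winv w = rev (map linv w)"

definition wmul :: "word \<Rightarrow> word \<Rightarrow> word" where
  "wmul u v = red (u @ v)"

definition conjugate :: "nat \<Rightarrow> word \<Rightarrow> word \<Rightarrow> bool" where
  "conjugate n a b = (\<exists>g\<in>Sigma n. b = wmul (winv g) (wmul a g))"

(* an endomorphism is given by the images f i of the generators t_i (i = 1..n);
   its action on a word (automorphisms act on the right: w^phi) *)
definition app :: "(nat \<Rightarrow> word) \<Rightarrow> word \<Rightarrow> word" where
  "app f w = red (concat (map (\<lambda>x. if snd x then f (fst x) else winv (f (fst x))) w))"

definition is_aut :: "nat \<Rightarrow> (nat \<Rightarrow> word) \<Rightarrow> bool" where
  "is_aut n f = ((\<forall>i\<in>{1..n}. f i \<in> Sigma n) \<and> bij_betw (app f) (Sigma n) (Sigma n))"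

definition z1 :: "nat \<Rightarrow> word" where
  "z1 n = winv (map (\<lambda>i. (i, True)) [1..<n+1])"

definition gen :: "nat \<Rightarrow> word" where
  "gen i = [(i, True)]"

definition Bn :: "nat \<Rightarrow> (nat \<Rightarrow> word) set" where
  "Bn n = {f. is_aut n f \<and> app f (z1 n) = z1 n \<and>
              (\<exists>\<pi>. bij_betw \<pi> {1..n} {1..n} \<and> (\<forall>i\<in>{1..n}. conjugate n (f i) (gen (\<pi> i))))}"

(* composition, acting on the right: t^(phi psi) = (t^phi)^psi *)
definition comp_aut :: "(nat \<Rightarrow> word) \<Rightarrow> (nat \<Rightarrow> word) \<Rightarrow> (nat \<Rightarrow> word)" where
  "comp_aut f g = (\<lambda>i. app g (f i))"

definition id_aut :: "nat \<Rightarrow> word" where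
  "id_aut = gen"

definition sigma :: "nat \<Rightarrow> (nat \<Rightarrow> word)" where
  "sigma i = (\<lambda>k. if k = i then [(i+1, True)]
                 else if k = i+1 then [(i+1, False), (i, True), (i+1, True)]
                 else [(k, True)])"

definition sigma_inv :: "nat \<Rightarrow> (nat \<Rightarrow> word)" where
  "sigma_inv i = (\<lambda>k. if k = i then [(i, True), (i+1, True), (i, False)]
                     else if k = i+1 then [(i, True)]
                     else [(k, True)])"

definition sigma_pow :: "nat \<Rightarrow> int \<Rightarrow> (nat \<Rightarrow> word)" where
  "sigma_pow i e = (if e = 1 then sigma i else sigma_inv i)"

definition norm_aut :: "nat \<Rightarrow> (nat \<Rightarrow> word) \<Rightarrow> nat" where
  "norm_aut n f = (\<Sum>i=1..n. length (f i))"

definition aut_eq :: "nat \<Rightarrow> (nat \<Rightarrow> word) \<Rightarrow> (nat \<Rightarrow> word) \<Rightarrow> bool" where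
  "aut_eq n f g = (\<forall>i\<in>{1..n}. f i = g i)"

definition sigma_word :: "(nat \<times> int) list \<Rightarrow> (nat \<Rightarrow> word)" where
  "sigma_word L = foldl (\<lambda>acc p. comp_aut acc (sigma_pow (fst p) (snd p))) id_aut L"

end

theory Submission
  imports Defs
begin

(* Every phi in B_n sends t_k to a conjugate  A_k^{-1} t_{p k} A_k  (reduced) of a generator, and
   the product t_1^phi ... t_n^phi reduces to t_1 ... t_n, a word of length n.  Suppose no
   sigma_i^(+-1) phi has norm at most ||phi|| - 2.  By the norm formulas for sigma_i phi and
   sigma_i^{-1} phi, the conjugates t_k^phi, t_{k+1}^phi then cannot cancel much against each
   other, so multiplying them in from the left keeps a controlled tail: the reduced partial
   product of the first m factors ends in  t_{p m} A_m  with a prefix of length >= m + |A_j| - 1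
   for all j <= m.  For m = n this forces all A_j = [] and then t_k^phi = t_k, i.e. phi = 1. *)

section \<open>Free reduction\<close>

definition cons_red :: "letter \<Rightarrow> word \<Rightarrow> word" where
  "cons_red x w = (case w of [] \<Rightarrow> [x] | y # ys \<Rightarrow> (if y = linv x then ys else x # y # ys))"

lemma red_Cons: "red (x # xs) = cons_red x (red xs)"
  by (simp add: cons_red_def)

declare red.simps(2)[simp del]

lemma linv_linv [simp]: "linv (linv x) = x"
  by (simp add: linv_def)

lemma linv_eq_iff: "(linv x = y) = (x = linv y)"
  by (auto simp: linv_def)

lemma fst_linv [simp]: "fst (linv x) = fst x"
  by (simp add: linv_def)

lemma red_append: "red (u @ v) = foldr cons_red u (red v)"
  by (induction u) (auto simp: red_Cons)

lemma reduced_Cons: "reduced (x # w) = (reduced w \<and> (w \<noteq> [] \<longrightarrow> hd w \<noteq> linv x))"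
  by (cases w) auto

lemma reduced_append:
  "reduced (u @ v) = (reduced u \<and> reduced v \<and> (u \<noteq> [] \<and> v \<noteq> [] \<longrightarrow> hd v \<noteq> linv (last u)))"
  by (induction u) (auto simp: reduced_Cons)

lemma reduced_cons_red: "reduced w \<Longrightarrow> reduced (cons_red x w)"
  by (cases w) (auto simp: cons_red_def reduced_Cons)

lemma reduced_red [simp]: "reduced (red w)"
  by (induction w) (auto simp: red_Cons reduced_cons_red)

lemma red_reduced: "reduced w \<Longrightarrow> red w = w"
  by (induction w) (auto simp: red_Cons reduced_Cons cons_red_def split: list.splits)

lemma red_red [simp]: "red (red w) = red w"
  by (simp add: red_reduced)

lemma red_single [simp]: "red [x] = [x]"
  by (simp add: red_Cons cons_red_def)

lemma reduced_positive: "(\<forall>x\<in>set w. snd x) \<Longrightarrow> reduced w"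
  by (induction w) (auto simp: reduced_Cons linv_def neq_Nil_conv)

lemma cons_red_cancel: "reduced z \<Longrightarrow> cons_red x (cons_red (linv x) z) = z"
  by (cases z) (auto simp: cons_red_def reduced_Cons split: list.splits)

lemma reduced_foldr_cons_red: "reduced w \<Longrightarrow> reduced (foldr cons_red u w)"
  by (induction u) (auto simp: reduced_cons_red)

lemma foldr_cons_red_red: "reduced w \<Longrightarrow> foldr cons_red (red u) w = foldr cons_red u w"
proof (induction u)
  case Nil
  then show ?case by simp
next
  case (Cons x u)
  note IH = Cons.IH[OF Cons.prems]
  show ?case
  proof (cases "red u")
    case Nil
    then show ?thesis using IH by (simp add: red_Cons cons_red_def)
  next
    case (Cons y ys)
    show ?thesis
    proof (cases "y = linv x")
      case True
      have "foldr cons_red (red (x # u)) w = foldr cons_red ys w"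
        using Cons True by (simp add: red_Cons cons_red_def)
      also have "\<dots> = cons_red x (cons_red (linv x) (foldr cons_red ys w))"
        using cons_red_cancel reduced_foldr_cons_red Cons.prems by metis
      also have "cons_red (linv x) (foldr cons_red ys w) = foldr cons_red (red u) w"
        using Cons True by simp
      finally show ?thesis using IH by simp
    next
      case False
      then show ?thesis using IH Cons by (simp add: red_Cons cons_red_def)
    qed
  qed
qed

lemma red_append_red2 [simp]: "red (u @ red v) = red (u @ v)"
  by (simp add: red_append)

lemma red_append_red1 [simp]: "red (red u @ v) = red (u @ v)"
  by (simp add: red_append foldr_cons_red_red)

lemma red_mid: "red (g @ red z @ h) = red (g @ z @ h)"
  by (metis red_append_red1 red_append_red2)

lemma length_red: "length (red w) \<le> length w"
proof (induction w)
  case (Cons x w)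
  have "length (cons_red x v) \<le> Suc (length v)" for v
    by (cases v) (auto simp: cons_red_def)
  then show ?case using Cons by (simp add: red_Cons) (meson Suc_le_mono order_trans)
qed simp

lemma set_red: "set (red w) \<subseteq> set w"
proof (induction w)
  case (Cons x w)
  have "set (cons_red x v) \<subseteq> insert x (set v)" for v
    by (cases v) (auto simp: cons_red_def)
  then show ?case using Cons by (auto simp: red_Cons)
qed simp

lemma winv_Nil [simp]: "winv [] = []"
  by (simp add: winv_def)

lemma winv_Cons [simp]: "winv (x # w) = winv w @ [linv x]"
  by (simp add: winv_def)

lemma winv_append [simp]: "winv (u @ v) = winv v @ winv u"
  by (simp add: winv_def)

lemma winv_winv [simp]: "winv (winv w) = w"
  by (simp add: winv_def rev_map comp_def)

lemma length_winv [simp]: "length (winv w) = length w"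
  by (simp add: winv_def)

lemma winv_Nil_iff [simp]: "(winv u = []) = (u = [])"
  by (simp add: winv_def)

lemma set_winv: "set (winv w) = linv ` set w"
  by (simp add: winv_def)

lemma last_winv: "w \<noteq> [] \<Longrightarrow> last (winv w) = linv (hd w)"
  by (cases w) auto

lemma hd_winv: "w \<noteq> [] \<Longrightarrow> hd (winv w) = linv (last w)"
  by (induction w) auto

lemma reduced_winv: "reduced w \<Longrightarrow> reduced (winv w)"
  by (induction w) (auto simp: reduced_Cons reduced_append last_winv linv_eq_iff)

lemma red_cancel: "red (X @ C @ winv C @ Y) = red (X @ Y)"
proof -
  have "red (C @ winv C @ Y) = red Y" for Y
  proof (induction C arbitrary: Y)
    case (Cons x C)
    have "red ((x # C) @ winv (x # C) @ Y) = cons_red x (red (C @ winv C @ (linv x # Y)))"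
      by (simp add: red_Cons)
    also have "\<dots> = red Y"
      using Cons by (simp add: red_Cons cons_red_cancel)
    finally show ?case .
  qed simp
  then show ?thesis by (metis red_append_red2)
qed

lemma red_cancel_letter: "red (X @ x # linv x # Y) = red (X @ Y)"
  using red_cancel[of X "[x]" Y] by simp

lemma red_cancel_inv: "red (X @ winv C @ C @ Y) = red (X @ Y)"
  using red_cancel[of X "winv C" Y] by simp

lemma red_winv: "red (winv w) = winv (red w)"
proof -
  have "red (w @ winv (red w)) = []"
    using red_cancel[of "[]" "red w" "[]"] red_append_red1[of w "winv (red w)"] by simp
  then have "red (winv w) = red (winv w @ w @ winv (red w))"
    by (metis append.assoc append_Nil2 red_append_red2)
  also have "\<dots> = red (winv (red w))"
    using red_cancel_inv[of "[]" w "winv (red w)"] by simp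
  finally show ?thesis by (simp add: red_reduced reduced_winv)
qed

section \<open>The action of endomorphisms on words\<close>

definition img :: "(nat \<Rightarrow> word) \<Rightarrow> letter \<Rightarrow> word" where
  "img f x = (if snd x then f (fst x) else winv (f (fst x)))"

lemma app_img: "app f w = red (concat (map (img f) w))"
  by (simp add: app_def img_def[abs_def])

lemma img_linv: "img f (linv x) = winv (img f x)"
  by (simp add: img_def linv_def)

lemma app_single: "app f [(m, True)] = red (f m)"
  by (simp add: app_img img_def)

lemma app_append: "app f (u @ v) = red (app f u @ app f v)"
  by (simp add: app_img)

lemma app_winv: "app f (winv w) = winv (app f w)"
proof -
  have "concat (map (img f) (winv w)) = winv (concat (map (img f) w))"
    by (induction w) (auto simp: img_linv)
  then show ?thesis by (simp add: app_img red_winv)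
qed

lemma app_red: "app f (red w) = app f w"
proof (induction w)
  case (Cons x w)
  have IH: "red (concat (map (img f) (red w))) = red (concat (map (img f) w))"
    using Cons.IH by (simp only: app_img)
  show ?case
  proof (cases "\<exists>ys. red w = linv x # ys")
    case True
    then obtain ys where ys: "red w = linv x # ys" by blast
    have "app f (x # w) = red (img f x @ red (concat (map (img f) w)))"
      by (simp add: app_img)
    also have "\<dots> = red (img f x @ winv (img f x) @ concat (map (img f) ys))"
      by (simp only: IH[symmetric] ys list.map concat.simps img_linv red_append_red2)
    also have "\<dots> = app f ys"
      using red_cancel[of "[]" "img f x"] by (simp add: app_img)
    finally show ?thesis using ys by (simp add: red_Cons cons_red_def)
  next
    case False
    then have "red (x # w) = x # red w"
      by (auto simp: red_Cons cons_red_def split: list.splits)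
    then have "app f (red (x # w)) = red (img f x @ red (concat (map (img f) (red w))))"
      by (simp add: app_img)
    then show ?thesis by (simp add: IH app_img)
  qed
qed simp

lemma app_concat: "app g (concat ws) = red (concat (map (app g) ws))"
  by (induction ws) (auto simp: app_img, metis red_append_red1 red_append_red2)

lemma app_comp: "app (comp_aut f g) w = app g (app f w)"
proof -
  have img_comp: "img (comp_aut f g) x = app g (img f x)" for x
    by (cases "snd x") (simp_all add: img_def comp_aut_def app_winv)
  have "app (comp_aut f g) w = red (concat (map (\<lambda>x. app g (img f x)) w))"
    unfolding app_img[of "comp_aut f g"] img_comp ..
  also have "\<dots> = app g (concat (map (img f) w))"
    by (simp add: app_concat comp_def)
  also have "\<dots> = app g (app f w)"
    by (simp only: app_img[of f w] app_red)
  finally show ?thesis .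
qed

lemma comp_assoc: "comp_aut (comp_aut f g) h = comp_aut f (comp_aut g h)"
proof
  fix x
  have "comp_aut f (comp_aut g h) x = app (comp_aut g h) (f x)"
    by (simp only: comp_aut_def)
  also have "\<dots> = app h (app g (f x))"
    by (rule app_comp)
  finally have "comp_aut f (comp_aut g h) x = app h (app g (f x))" .
  then show "comp_aut (comp_aut f g) h x = comp_aut f (comp_aut g h) x"
    by (simp add: comp_aut_def)
qed

lemma app_gen: "app gen w = red w"
proof -
  have "concat (map (img gen) w) = w"
    by (induction w) (auto simp: img_def gen_def linv_def)
  then show ?thesis by (simp add: app_img)
qed

lemma app_cong: "(\<And>x. x \<in> set w \<Longrightarrow> f (fst x) = g (fst x)) \<Longrightarrow> app f w = app g w"
proof -
  assume "\<And>x. x \<in> set w \<Longrightarrow> f (fst x) = g (fst x)"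
  then have "map (img f) w = map (img g) w"
    by (intro map_cong) (auto simp: img_def)
  then show ?thesis by (simp only: app_img)
qed

lemma Sigma_iff: "w \<in> Sigma n \<longleftrightarrow> reduced w \<and> (\<forall>x\<in>set w. fst x \<in> {1..n})"
  by (auto simp: Sigma_def)

lemma app_Sigma:
  assumes "\<forall>i\<in>{1..n}. f i \<in> Sigma n" "\<forall>x\<in>set w. fst x \<in> {1..n}"
  shows "app f w \<in> Sigma n"
proof -
  have "\<forall>y\<in>set (concat (map (img f) w)). fst y \<in> {1..n}"
  proof
    fix y assume "y \<in> set (concat (map (img f) w))"
    then obtain x where x: "x \<in> set w" "y \<in> set (img f x)" by auto
    have "f (fst x) \<in> Sigma n"
      using assms x(1) by auto
    then have "\<forall>z\<in>set (f (fst x)). fst z \<in> {1..n}"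
      by (simp add: Sigma_iff)
    then show "fst y \<in> {1..n}"
      using x(2) by (auto simp: img_def set_winv split: if_splits)
  qed
  then show ?thesis
    using set_red[of "concat (map (img f) w)"] unfolding app_img Sigma_iff by (simp only: reduced_red) blast
qed

lemma app_Sigma_id: "w \<in> Sigma n \<Longrightarrow> app gen w = w"
  by (simp add: app_gen red_reduced Sigma_iff)

section \<open>Conjugates of generators and the shape of elements of B_n\<close>

lemma conjugate_genE:
  assumes "a \<in> Sigma n" "conjugate n a (gen p)"
  obtains g where "g \<in> Sigma n" "a = red (g @ [(p, True)] @ winv g)"
proof -
  obtain g where g: "g \<in> Sigma n" "gen p = red (winv g @ red (a @ g))"
    using assms(2) by (auto simp: conjugate_def wmul_def)
  have "red (g @ gen p @ winv g) = red (g @ winv g @ a @ g @ winv g)"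
    using g(2) red_mid[of g "winv g @ red (a @ g)" "winv g"] red_mid[of "g @ winv g" "a @ g" "winv g"]
    by simp
  also have "\<dots> = a"
    using red_cancel[of "[]" g "a @ g @ winv g"] red_cancel[of a g "[]"] assms(1)
    by (simp add: Sigma_iff red_reduced)
  finally show ?thesis using g(1) that by (auto simp: gen_def)
qed

lemma conjugate_genI:
  assumes "h \<in> Sigma n" "a = red (h @ [(q, True)] @ winv h)"
  shows "conjugate n a (gen q)"
proof -
  have "red (winv h @ red (a @ h)) = red (winv h @ h @ [(q, True)] @ winv h @ h)"
    using assms(2) red_mid[of "winv h" "a @ h" "[]"] red_mid[of "winv h" "h @ [(q, True)] @ winv h" h]
    by simp
  also have "\<dots> = [(q, True)]"
    using red_cancel_inv[of "[]" h "[(q, True)] @ winv h @ h"] red_cancel_inv[of "[(q, True)]" h "[]"]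
    by simp
  finally show ?thesis
    unfolding conjugate_def wmul_def gen_def using assms(1) by (intro bexI[of _ h]) auto
qed

lemma red_conjugate_shape:
  "reduced A \<Longrightarrow> \<exists>A'. red (winv A @ x # A) = winv A' @ x # A' \<and> reduced (winv A' @ x # A')"
proof (induction A)
  case Nil
  then show ?case by (intro exI[of _ "[]"]) simp
next
  case (Cons a A)
  have "reduced A" using Cons.prems by (simp add: reduced_Cons)
  show ?case
  proof (cases "a = x \<or> a = linv x")
    case True
    then have "red (winv (a # A) @ x # a # A) = red (winv A @ x # A)"
      using red_cancel_letter[of "winv A" "linv x" "x # A"] red_cancel_letter[of "winv A @ [x]" x A]
      by auto
    then show ?thesis using Cons.IH[OF \<open>reduced A\<close>] by simp
  next
    case False
    then have "reduced (winv (a # A) @ x # a # A)"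
      using Cons.prems by (auto simp: reduced_append reduced_Cons reduced_winv linv_eq_iff last_winv)
    then show ?thesis by (intro exI[of _ "a # A"]) (simp add: red_reduced)
  qed
qed

lemma Bn_image_shape:
  assumes "\<phi> \<in> Bn n" "k \<in> {1..n}"
  shows "\<exists>A p. \<phi> k = winv A @ (p, True) # A \<and> reduced (\<phi> k)"
proof -
  obtain \<pi> where "\<forall>i\<in>{1..n}. conjugate n (\<phi> i) (gen (\<pi> i))"
    using assms(1) by (auto simp: Bn_def)
  then have conj: "conjugate n (\<phi> k) (gen (\<pi> k))" using assms(2) by blast
  have \<phi>k: "\<phi> k \<in> Sigma n" using assms by (auto simp: Bn_def is_aut_def)
  obtain g where g: "g \<in> Sigma n" "\<phi> k = red (g @ [(\<pi> k, True)] @ winv g)"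
    using conjugate_genE[OF \<phi>k conj] by blast
  have "reduced (winv g)" using g(1) by (simp add: Sigma_iff reduced_winv)
  then obtain A where "red (winv (winv g) @ (\<pi> k, True) # winv g) = winv A @ (\<pi> k, True) # A"
    using red_conjugate_shape by blast
  then show ?thesis using g \<phi>k by (auto simp: Sigma_iff)
qed

definition t_prod :: "nat \<Rightarrow> word" where
  "t_prod n = map (\<lambda>i. (i, True)) [1..<n+1]"

lemma z1_t_prod: "z1 n = winv (t_prod n)"
  by (simp add: z1_def t_prod_def)

lemma reduced_t_prod: "reduced (t_prod n)"
  by (rule reduced_positive) (auto simp: t_prod_def)

definition partial_prod :: "(nat \<Rightarrow> word) \<Rightarrow> nat \<Rightarrow> word" where
  "partial_prod W m = red (concat (map W [1..<m+1]))"

lemma partial_prod_Suc: "partial_prod W (Suc m) = red (partial_prod W m @ W (Suc m))"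
  by (simp add: partial_prod_def)

lemma Bn_partial_prod:
  assumes "\<phi> \<in> Bn n"
  shows "partial_prod \<phi> n = t_prod n"
proof -
  have "app \<phi> (t_prod n) = partial_prod \<phi> n"
    by (simp add: app_img t_prod_def img_def comp_def partial_prod_def)
  moreover have "winv (app \<phi> (t_prod n)) = winv (t_prod n)"
    using assms by (simp add: Bn_def z1_t_prod app_winv)
  ultimately show ?thesis by (metis winv_winv)
qed

(* Conjugating  (D z^{-1} C)^{-1} y (D z^{-1} C)  by  C^{-1} z C  cancels the letter z twice:
   the result is  (D C)^{-1} y (D C), which is shorter by 2. *)
lemma conjugate_shortens:
  "length (red (winv (winv C @ z # C) @ (winv (D @ linv z # C) @ y # D @ linv z # C) @ (winv C @ z # C)))
     + 2 \<le> length (winv (D @ linv z # C) @ y # D @ linv z # C)"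
proof -
  have "red (winv (winv C @ z # C) @ (winv (D @ linv z # C) @ y # D @ linv z # C) @ (winv C @ z # C))
      = red ((winv C @ [linv z]) @ C @ winv C @ (z # winv D @ y # D @ linv z # C @ winv C @ z # C))"
    by simp
  also have "\<dots> = red (winv C @ linv z # z # winv D @ y # D @ linv z # C @ winv C @ z # C)"
    by (simp only: red_cancel) simp
  also have "\<dots> = red ((winv C @ winv D @ y # D @ [linv z]) @ C @ winv C @ (z # C))"
    using red_cancel_letter[of "winv C" "linv z"] by simp
  also have "\<dots> = red ((winv C @ winv D @ y # D) @ linv z # z # C)"
    by (simp only: red_cancel) simp
  also have "\<dots> = red ((winv C @ winv D @ y # D) @ C)"
    using red_cancel_letter[of "winv C @ winv D @ y # D" "linv z" C] by simp
  finally show ?thesis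
    using length_red[of "(winv C @ winv D @ y # D) @ C"] by simp
qed

(* Multiplying a reduced word ending in  x A' C  by the conjugate  (B' C)^{-1} y (B' C),  where
   C is the longest common suffix, cancels exactly C C^{-1} unless a letter x or y would meet
   its inverse at the junction. *)
lemma red_append_conjugate:
  assumes P: "reduced (Q @ x # A' @ C)" and V: "reduced (winv C @ winv B' @ y # B' @ C)"
    and suffix: "A' = [] \<or> B' = [] \<or> last A' \<noteq> last B'"
    and left: "A' = [] \<Longrightarrow> B' \<noteq> [] \<Longrightarrow> last B' \<noteq> x"
    and right: "B' = [] \<Longrightarrow> A' \<noteq> [] \<Longrightarrow> last A' \<noteq> linv y"
    and xy: "y \<noteq> linv x"
  shows "red ((Q @ x # A' @ C) @ winv C @ winv B' @ y # B' @ C) = Q @ x # A' @ winv B' @ y # B' @ C"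
proof -
  have cancel: "red ((Q @ x # A' @ C) @ winv C @ winv B' @ y # B' @ C)
      = red ((Q @ x # A') @ winv B' @ y # B' @ C)"
    using red_cancel[of "Q @ x # A'" C "winv B' @ y # B' @ C"] by simp
  have "reduced (Q @ x # A')"
    using P reduced_append[of "Q @ x # A'" C] by simp
  moreover have "reduced (winv B' @ y # B' @ C)"
    using V reduced_append[of "winv C"] by simp
  moreover have "hd (winv B' @ y # B' @ C) \<noteq> linv (last (Q @ x # A'))"
    using suffix left right xy
    by (cases "A' = []"; cases "B' = []") (auto simp: hd_winv linv_eq_iff)
  ultimately have "reduced ((Q @ x # A') @ winv B' @ y # B' @ C)"
    by (simp only: reduced_append) simp
  then show ?thesis using cancel by (simp add: red_reduced)
qed

section \<open>Rigidity of products of conjugates\<close>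

context
  fixes n :: nat and W A :: "nat \<Rightarrow> word" and p :: "nat \<Rightarrow> nat"
  assumes shape: "\<And>k. k \<in> {1..n} \<Longrightarrow> W k = winv (A k) @ (p k, True) # A k \<and> reduced (W k)"
    and no_short_left:
      "\<And>k. k \<in> {1..<n} \<Longrightarrow> length (W (k+1)) < length (red (W k @ W (k+1) @ winv (W k))) + 2"
    and no_short_right:
      "\<And>k. k \<in> {1..<n} \<Longrightarrow> length (W k) < length (red (winv (W (k+1)) @ W k @ W (k+1))) + 2"
begin

lemma partial_prod_shape:
  assumes "1 \<le> m" "m \<le> n"
  shows "\<exists>Q. partial_prod W m = Q @ (p m, True) # A m \<and> (\<forall>j\<in>{1..m}. m + length (A j) \<le> Suc (length Q))"
  using assms
proof (induction m rule: nat_induct_at_least)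
  case base
  have "W 1 = winv (A 1) @ (p 1, True) # A 1" "reduced (W 1)"
    using shape[of 1] base by auto
  then show ?case by (intro exI[of _ "winv (A 1)"]) (simp add: partial_prod_def red_reduced)
next
  case (Suc k)
  then obtain Q where Q: "partial_prod W k = Q @ (p k, True) # A k"
    and bound: "\<forall>j\<in>{1..k}. k + length (A j) \<le> Suc (length Q)"
    by auto
  have k: "k \<in> {1..<n}" using Suc by auto
  define x y where "x = (p k, True)" and "y = (p (Suc k), True)"
  obtain A' B' C where a: "A k = A' @ C" and b: "A (Suc k) = B' @ C"
    and suffix: "A' = [] \<or> B' = [] \<or> last A' \<noteq> last B'"
    using longest_common_suffix by blast
  have Wk: "W k = winv C @ winv A' @ x # A' @ C"
    and Wk1: "W (Suc k) = winv C @ winv B' @ y # B' @ C" "reduced (W (Suc k))"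
    using shape[of k] shape[of "Suc k"] k a b by (auto simp: x_def y_def)
  have left: "last B' \<noteq> x" if "A' = []" "B' \<noteq> []"
  proof
    assume "last B' = x"
    then obtain D where "B' = D @ [x]" using \<open>B' \<noteq> []\<close> by (metis append_butlast_last_id)
    then have "length (red (W k @ W (Suc k) @ winv (W k))) + 2 \<le> length (W (Suc k))"
      using conjugate_shortens[of C "linv x" D y] Wk Wk1 \<open>A' = []\<close> by simp
    then show False using no_short_left[OF k] by simp
  qed
  have right: "last A' \<noteq> linv y" if "B' = []" "A' \<noteq> []"
  proof
    assume "last A' = linv y"
    then obtain D where "A' = D @ [linv y]" using \<open>A' \<noteq> []\<close> by (metis append_butlast_last_id)
    then have "length (red (winv (W (Suc k)) @ W k @ W (Suc k))) + 2 \<le> length (W k)"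
      using conjugate_shortens[of C y D x] Wk Wk1 \<open>B' = []\<close> by simp
    then show False using no_short_right[OF k] by simp
  qed
  have "reduced (Q @ x # A' @ C)"
    using Q a x_def by (metis partial_prod_def reduced_red)
  then have "partial_prod W (Suc k) = (Q @ x # A' @ winv B') @ y # A (Suc k)"
    using red_append_conjugate[OF _ _ suffix left right] Q a b Wk1
    by (simp add: partial_prod_Suc x_def y_def linv_def)
  moreover have "\<forall>j\<in>{1..Suc k}. Suc k + length (A j) \<le> Suc (length (Q @ x # A' @ winv B'))"
  proof
    fix j assume j: "j \<in> {1..Suc k}"
    show "Suc k + length (A j) \<le> Suc (length (Q @ x # A' @ winv B'))"
    proof (cases "j = Suc k")
      case True
      have "k + length (A k) \<le> Suc (length Q)" using bound Suc.hyps by auto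
      then show ?thesis using True a b by simp
    next
      case False
      then have "k + length (A j) \<le> Suc (length Q)" using bound j by auto
      then show ?thesis by simp
    qed
  qed
  ultimately show ?case by (auto simp: y_def)
qed

lemma conjugates_rigid:
  assumes "1 \<le> n" and prod: "partial_prod W n = t_prod n"
  shows "\<forall>k\<in>{1..n}. W k = [(k, True)]"
proof -
  obtain Q where Q: "partial_prod W n = Q @ (p n, True) # A n"
    and bound: "\<forall>j\<in>{1..n}. n + length (A j) \<le> Suc (length Q)"
    using partial_prod_shape[OF assms(1) order_refl] by blast
  have "Suc (length Q) + length (A n) = n"
    using Q prod by (metis length_append length_Cons length_map length_upt t_prod_def
        add_Suc add_Suc_right add_diff_cancel_right')
  moreover have "n + length (A n) \<le> Suc (length Q)" using bound assms(1) by auto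
  ultimately have "Suc (length Q) = n" by simp
  then have A: "\<forall>j\<in>{1..n}. A j = []" using bound by auto
  then have W: "\<forall>j\<in>{1..n}. W j = [(p j, True)]" using shape by auto
  have map_W: "map W [1..<n+1] = map (\<lambda>j. [(p j, True)]) [1..<n+1]"
    using W by (intro map_cong) auto
  have "partial_prod W n = map (\<lambda>j. (p j, True)) [1..<n+1]"
    unfolding partial_prod_def map_W concat_map_singleton
    by (rule red_reduced, rule reduced_positive) auto
  then have "\<forall>j\<in>{1..n}. p j = j"
    using prod by (auto simp: t_prod_def)
  then show ?thesis using W by simp
qed

end

section \<open>Norm reduction by sigma_i^(+-1)\<close>

lemma sum_change_two:
  fixes f g :: "nat \<Rightarrow> nat"
  assumes "finite S" "a \<in> S" "b \<in> S" "a \<noteq> b" "\<And>j. j \<in> S \<Longrightarrow> j \<noteq> a \<Longrightarrow> j \<noteq> b \<Longrightarrow> f j = g j"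
  shows "sum f S + g a + g b = sum g S + f a + f b"
proof -
  have "sum f (S - {a} - {b}) = sum g (S - {a} - {b})"
    using assms(5) by (intro sum.cong) auto
  then show ?thesis
    using assms(1-4) by (simp add: sum.remove[of S a] sum.remove[of "S - {a}" b])
qed

lemma app_conj_three: "app \<phi> [(a, False), (b, True), (c, True)] = red (winv (\<phi> a) @ \<phi> b @ \<phi> c)"
  by (simp add: app_img img_def)

lemma app_conj_three': "app \<phi> [(a, True), (b, True), (c, False)] = red (\<phi> a @ \<phi> b @ winv (\<phi> c))"
  by (simp add: app_img img_def)

(* sigma_i phi  replaces  t_i^phi, t_{i+1}^phi  by  t_{i+1}^phi, (t_{i+1}^phi)^{-1} t_i^phi t_{i+1}^phi. *)
lemma norm_sigma:
  assumes "1 \<le> k" "k + 1 \<le> n" "\<forall>j\<in>{1..n}. reduced (\<phi> j)"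
  shows "norm_aut n (comp_aut (sigma k) \<phi>) + length (\<phi> k)
       = norm_aut n \<phi> + length (red (winv (\<phi> (k+1)) @ \<phi> k @ \<phi> (k+1)))"
proof -
  let ?f = "\<lambda>j. length (comp_aut (sigma k) \<phi> j)" and ?g = "\<lambda>j. length (\<phi> j)"
  have "sum ?f {1..n} + ?g k + ?g (k+1) = sum ?g {1..n} + ?f k + ?f (k+1)"
    by (rule sum_change_two)
       (use assms in \<open>auto simp: comp_aut_def sigma_def app_single red_reduced\<close>)
  moreover have "?f k = ?g (k+1)"
    using assms by (simp add: comp_aut_def sigma_def app_single red_reduced)
  moreover have "?f (k+1) = length (red (winv (\<phi> (k+1)) @ \<phi> k @ \<phi> (k+1)))"
    by (simp add: comp_aut_def sigma_def app_conj_three)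
  ultimately show ?thesis by (simp add: norm_aut_def)
qed

(* sigma_i^{-1} phi  replaces  t_i^phi, t_{i+1}^phi  by  t_i^phi t_{i+1}^phi (t_i^phi)^{-1}, t_i^phi. *)
lemma norm_sigma_inv:
  assumes "1 \<le> k" "k + 1 \<le> n" "\<forall>j\<in>{1..n}. reduced (\<phi> j)"
  shows "norm_aut n (comp_aut (sigma_inv k) \<phi>) + length (\<phi> (k+1))
       = norm_aut n \<phi> + length (red (\<phi> k @ \<phi> (k+1) @ winv (\<phi> k)))"
proof -
  let ?f = "\<lambda>j. length (comp_aut (sigma_inv k) \<phi> j)" and ?g = "\<lambda>j. length (\<phi> j)"
  have "sum ?f {1..n} + ?g k + ?g (k+1) = sum ?g {1..n} + ?f k + ?f (k+1)"
    by (rule sum_change_two)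
       (use assms in \<open>auto simp: comp_aut_def sigma_inv_def app_single red_reduced\<close>)
  moreover have "?f (k+1) = ?g k"
    using assms by (simp add: comp_aut_def sigma_inv_def app_single red_reduced)
  moreover have "?f k = length (red (\<phi> k @ \<phi> (k+1) @ winv (\<phi> k)))"
    by (simp add: comp_aut_def sigma_inv_def app_conj_three')
  ultimately show ?thesis by (simp add: norm_aut_def)
qed

lemma Bn_norm_reduction:
  assumes "1 \<le> n" and B: "\<phi> \<in> Bn n" and nontrivial: "\<not> aut_eq n \<phi> id_aut"
  shows "\<exists>i\<in>{1..<n}. \<exists>e\<in>{1::int, -1}. norm_aut n (comp_aut (sigma_pow i e) \<phi>) + 2 \<le> norm_aut n \<phi>"
proof (rule ccontr)
  assume no_reduction: "\<not> ?thesis"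
  obtain A p where shape: "\<And>k. k \<in> {1..n} \<Longrightarrow> \<phi> k = winv (A k) @ (p k, True) # A k \<and> reduced (\<phi> k)"
    using Bn_image_shape[OF B] by metis
  then have reduced: "\<forall>j\<in>{1..n}. reduced (\<phi> j)" by blast
  have "\<forall>k\<in>{1..n}. \<phi> k = [(k, True)]"
  proof (rule conjugates_rigid[OF shape _ _ assms(1) Bn_partial_prod[OF B]])
    fix k assume k: "k \<in> {1..<n}"
    show "length (\<phi> (k+1)) < length (red (\<phi> k @ \<phi> (k+1) @ winv (\<phi> k))) + 2"
      using norm_sigma_inv[of k n \<phi>] no_reduction k reduced by (force simp: sigma_pow_def)
    show "length (\<phi> k) < length (red (winv (\<phi> (k+1)) @ \<phi> k @ \<phi> (k+1))) + 2"
      using norm_sigma[of k n \<phi>] no_reduction k reduced by (force simp: sigma_pow_def)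
  qed
  then show False using nontrivial by (simp add: aut_eq_def id_aut_def gen_def)
qed

section \<open>B_n is closed under composition and contains the sigma_i\<close>

lemma Bn_Sigma: "\<psi> \<in> Bn n \<Longrightarrow> \<forall>i\<in>{1..n}. \<psi> i \<in> Sigma n"
  by (simp add: Bn_def is_aut_def)

lemma letters_Sigma: "w \<in> Sigma n \<Longrightarrow> \<forall>x\<in>set w. fst x \<in> {1..n}"
  by (simp add: Sigma_iff)

lemma Bn_intro:
  assumes f: "\<forall>i\<in>{1..n}. f i \<in> Sigma n" and g: "\<forall>i\<in>{1..n}. g i \<in> Sigma n"
    and fg: "\<forall>i\<in>{1..n}. comp_aut f g i = gen i" and gf: "\<forall>i\<in>{1..n}. comp_aut g f i = gen i"
    and z: "app f (z1 n) = z1 n"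
    and \<pi>: "bij_betw \<pi> {1..n} {1..n}"
    and conj: "\<forall>i\<in>{1..n}. \<exists>h\<in>Sigma n. f i = red (h @ [(\<pi> i, True)] @ winv h)"
  shows "f \<in> Bn n"
proof -
  have inverse: "app v (app u w) = w"
    if "w \<in> Sigma n" "\<forall>i\<in>{1..n}. comp_aut u v i = gen i" for u v w
  proof -
    have "app v (app u w) = app (comp_aut u v) w" by (simp add: app_comp)
    also have "\<dots> = app gen w" using that letters_Sigma[OF that(1)] by (intro app_cong) auto
    finally show ?thesis using app_Sigma_id[OF that(1)] by simp
  qed
  have "bij_betw (app f) (Sigma n) (Sigma n)"
    by (rule bij_betw_byWitness[where f'="app g"])
       (use inverse fg gf app_Sigma[OF f] app_Sigma[OF g] letters_Sigma in auto)
  moreover have "\<forall>i\<in>{1..n}. conjugate n (f i) (gen (\<pi> i))"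
    using conj conjugate_genI by blast
  ultimately show ?thesis
    using f z \<pi> by (auto simp: Bn_def is_aut_def)
qed

lemma Bn_cong:
  assumes B: "\<psi> \<in> Bn n" and eq: "aut_eq n \<phi> \<psi>"
  shows "\<phi> \<in> Bn n"
proof -
  have same_action: "app \<phi> w = app \<psi> w" if "\<forall>x\<in>set w. fst x \<in> {1..n}" for w
    using eq that by (intro app_cong) (auto simp: aut_eq_def)
  have "bij_betw (app \<phi>) (Sigma n) (Sigma n) = bij_betw (app \<psi>) (Sigma n) (Sigma n)"
    using same_action letters_Sigma by (intro bij_betw_cong) auto
  moreover have "\<forall>x\<in>set (z1 n). fst x \<in> {1..n}"
    by (auto simp: z1_t_prod t_prod_def set_winv)
  ultimately show ?thesis
    using B eq same_action by (auto simp: Bn_def is_aut_def aut_eq_def)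
qed

lemma conjugate_app:
  assumes g: "\<forall>i\<in>{1..n}. g i \<in> Sigma n"
    and a: "a \<in> Sigma n" "conjugate n a (gen q)"
    and gq: "g q \<in> Sigma n" "conjugate n (g q) (gen r)"
  shows "conjugate n (app g a) (gen r)"
proof -
  obtain h where h: "h \<in> Sigma n" "a = red (h @ [(q, True)] @ winv h)"
    using conjugate_genE[OF a] by blast
  obtain h' where h': "h' \<in> Sigma n" "g q = red (h' @ [(r, True)] @ winv h')"
    using conjugate_genE[OF gq] by blast
  define X where "X = app g h @ h'"
  have "app g a = app g (h @ [(q, True)] @ winv h)"
    using h(2) by (simp only: app_red)
  also have "\<dots> = red (app g h @ red (app g [(q, True)] @ app g (winv h)))"
    by (simp only: app_append)
  also have "\<dots> = red (app g h @ g q @ winv (app g h))"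
    by (simp add: app_winv app_single red_mid)
  also have "\<dots> = red (X @ [(r, True)] @ winv X)"
    using h'(2) by (simp add: red_mid X_def)
  also have "\<dots> = red (red X @ [(r, True)] @ winv (red X))"
    using red_append_red2[of "X @ [(r, True)]" "winv X"] by (simp add: red_winv[symmetric])
  finally have "app g a = red (red X @ [(r, True)] @ winv (red X))" .
  moreover have "red X \<in> Sigma n"
    using app_Sigma[OF g letters_Sigma[OF h(1)]] h'(1) set_red[of X]
    unfolding Sigma_iff X_def by auto
  ultimately show ?thesis by (blast intro: conjugate_genI)
qed

lemma Bn_comp:
  assumes F: "f \<in> Bn n" and G: "g \<in> Bn n"
  shows "comp_aut f g \<in> Bn n"
proof -
  have f: "\<forall>i\<in>{1..n}. f i \<in> Sigma n" and g: "\<forall>i\<in>{1..n}. g i \<in> Sigma n"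
    using F G Bn_Sigma by auto
  have vals: "\<forall>i\<in>{1..n}. comp_aut f g i \<in> Sigma n"
    using f app_Sigma[OF g] letters_Sigma unfolding comp_aut_def by blast
  have "bij_betw (app g \<circ> app f) (Sigma n) (Sigma n)"
    using F G by (auto simp: Bn_def is_aut_def intro: bij_betw_trans)
  moreover have "app (comp_aut f g) = app g \<circ> app f"
    by (rule ext) (simp only: app_comp comp_def)
  moreover have "app (comp_aut f g) (z1 n) = z1 n"
    using F G by (simp add: app_comp Bn_def)
  moreover obtain \<pi>f where \<pi>f: "bij_betw \<pi>f {1..n} {1..n}" "\<forall>i\<in>{1..n}. conjugate n (f i) (gen (\<pi>f i))"
    using F by (auto simp: Bn_def)
  moreover obtain \<pi>g where \<pi>g: "bij_betw \<pi>g {1..n} {1..n}" "\<forall>i\<in>{1..n}. conjugate n (g i) (gen (\<pi>g i))"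
    using G by (auto simp: Bn_def)
  moreover have "conjugate n (comp_aut f g i) (gen ((\<pi>g \<circ> \<pi>f) i))" if i: "i \<in> {1..n}" for i
  proof -
    have "\<pi>f i \<in> {1..n}" using \<pi>f(1) i by (auto simp: bij_betw_def)
    then show ?thesis
      unfolding comp_aut_def comp_def using conjugate_app g f \<pi>f(2) \<pi>g(2) i by blast
  qed
  ultimately show ?thesis
    using vals by (auto simp: Bn_def is_aut_def intro!: exI[of _ "\<pi>g \<circ> \<pi>f"] bij_betw_trans)
qed

lemma gen_Sigma: "\<forall>k\<in>{1..n}. gen k \<in> Sigma n"
  by (auto simp: gen_def Sigma_iff)

lemma id_Bn: "id_aut \<in> Bn n"
proof -
  have "comp_aut gen gen = gen"
    by (rule ext) (simp add: comp_aut_def app_gen gen_def)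
  moreover have "app gen (z1 n) = z1 n"
    by (simp add: app_gen z1_t_prod red_winv reduced_t_prod red_reduced)
  moreover have "\<forall>i\<in>{1..n}. \<exists>h\<in>Sigma n. gen i = red (h @ [(id i, True)] @ winv h)"
    by (auto simp: gen_def Sigma_iff intro: bexI[of _ "[]"])
  ultimately show ?thesis
    unfolding id_aut_def by (intro Bn_intro[OF gen_Sigma gen_Sigma _ _ _ bij_betw_id]) auto
qed

lemma sigma_sigma_inv: "comp_aut (sigma i) (sigma_inv i) = gen"
  by (rule ext) (simp add: comp_aut_def sigma_def sigma_inv_def app_img img_def red_Cons cons_red_def linv_def gen_def)

lemma sigma_inv_sigma: "comp_aut (sigma_inv i) (sigma i) = gen"
  by (rule ext) (simp add: comp_aut_def sigma_def sigma_inv_def app_img img_def red_Cons cons_red_def linv_def gen_def)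

lemma sigma_Sigma: "1 \<le> i \<Longrightarrow> i + 1 \<le> n \<Longrightarrow> \<forall>k\<in>{1..n}. sigma i k \<in> Sigma n"
  by (auto simp: sigma_def Sigma_iff linv_def)

lemma sigma_inv_Sigma: "1 \<le> i \<Longrightarrow> i + 1 \<le> n \<Longrightarrow> \<forall>k\<in>{1..n}. sigma_inv i k \<in> Sigma n"
  by (auto simp: sigma_inv_def Sigma_iff linv_def)

lemma t_prod_split:
  assumes "1 \<le> i" "i + 1 \<le> n"
  shows "t_prod n = map (\<lambda>j. (j, True)) [1..<i] @ [(i, True), (i+1, True)] @ map (\<lambda>j. (j, True)) [i+2..<n+1]"
proof -
  have "[1..<n+1] = [1..<i] @ [i..<n+1]"
    using assms upt_add_eq_append[of 1 i "n+1-i"] by simp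
  also have "[i..<n+1] = i # (i+1) # [i+2..<n+1]"
    using assms by (simp add: upt_conv_Cons)
  finally show ?thesis by (simp add: t_prod_def)
qed

lemma app_t_prod:
  assumes "1 \<le> i" "i + 1 \<le> n" and f: "\<And>j. j \<noteq> i \<Longrightarrow> j \<noteq> i + 1 \<Longrightarrow> f j = [(j, True)]"
  shows "app f (t_prod n)
       = red (map (\<lambda>j. (j, True)) [1..<i] @ f i @ f (i+1) @ map (\<lambda>j. (j, True)) [i+2..<n+1])"
proof -
  have fixed: "concat (map (img f) (map (\<lambda>j. (j, True)) [a..<b])) = map (\<lambda>j. (j, True)) [a..<b]"
    if "b \<le> i \<or> i + 2 \<le> a" for a b
  proof -
    have eq: "map (img f \<circ> (\<lambda>j. (j, True))) [a..<b] = map (\<lambda>j. [(j, True)]) [a..<b]"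
      using that by (intro map_cong) (auto simp: img_def f)
    show ?thesis by (simp only: map_map eq concat_map_singleton)
  qed
  show ?thesis
    unfolding app_img t_prod_split[OF assms(1,2)] map_append concat_append fixed[OF disjI1 [OF order_refl]]
      fixed[OF disjI2 [OF order_refl]]
    by (simp add: img_def)
qed

lemma sigma_z1: assumes "1 \<le> i" "i + 1 \<le> n" shows "app (sigma i) (z1 n) = z1 n"
proof -
  let ?P = "map (\<lambda>j. (j, True)) [1..<i]" and ?S = "map (\<lambda>j. (j, True)) [i+2..<n+1]"
  have "app (sigma i) (t_prod n) = red (?P @ [(i+1, True)] @ [(i+1, False), (i, True), (i+1, True)] @ ?S)"
    using app_t_prod[OF assms, of "sigma i"] by (simp add: sigma_def)
  also have "\<dots> = red (?P @ (i, True) # (i+1, True) # ?S)"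
    using red_cancel_letter[of ?P "(i+1, True)" "(i, True) # (i+1, True) # ?S"] by (simp add: linv_def)
  also have "\<dots> = t_prod n"
    using t_prod_split[OF assms] reduced_t_prod[of n] by (simp add: red_reduced)
  finally show ?thesis by (simp add: z1_t_prod app_winv)
qed

lemma sigma_inv_z1: assumes "1 \<le> i" "i + 1 \<le> n" shows "app (sigma_inv i) (z1 n) = z1 n"
proof -
  let ?P = "map (\<lambda>j. (j, True)) [1..<i]" and ?S = "map (\<lambda>j. (j, True)) [i+2..<n+1]"
  have "app (sigma_inv i) (t_prod n) = red (?P @ [(i, True), (i+1, True), (i, False)] @ [(i, True)] @ ?S)"
    using app_t_prod[OF assms, of "sigma_inv i"] by (simp add: sigma_inv_def)
  also have "\<dots> = red ((?P @ [(i, True), (i+1, True)]) @ ?S)"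
    using red_cancel_letter[of "?P @ [(i, True), (i+1, True)]" "(i, False)" ?S] by (simp add: linv_def)
  also have "\<dots> = t_prod n"
    using t_prod_split[OF assms] reduced_t_prod[of n] by (simp add: red_reduced)
  finally show ?thesis by (simp add: z1_t_prod app_winv)
qed

(* The transposition of i and i+1: the permutation of conjugacy classes induced by sigma_i. *)
definition swap_adj :: "nat \<Rightarrow> nat \<Rightarrow> nat" where
  "swap_adj i k = (if k = i then i + 1 else if k = i + 1 then i else k)"

lemma swap_adj_bij: "1 \<le> i \<Longrightarrow> i + 1 \<le> n \<Longrightarrow> bij_betw (swap_adj i) {1..n} {1..n}"
  by (rule bij_betw_byWitness[where f'="swap_adj i"]) (auto simp: swap_adj_def)

lemma sigma_Bn:
  assumes "1 \<le> i" "i + 1 \<le> n"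
  shows "sigma i \<in> Bn n"
proof (rule Bn_intro[OF sigma_Sigma[OF assms] sigma_inv_Sigma[OF assms] _ _ sigma_z1[OF assms]
        swap_adj_bij[OF assms]])
  show "\<forall>k\<in>{1..n}. \<exists>h\<in>Sigma n. sigma i k = red (h @ [(swap_adj i k, True)] @ winv h)"
  proof
    fix k assume "k \<in> {1..n}"
    show "\<exists>h\<in>Sigma n. sigma i k = red (h @ [(swap_adj i k, True)] @ winv h)"
    proof (cases "k = i + 1")
      case True
      then show ?thesis using assms
        by (intro bexI[of _ "[(i+1, False)]"]) (auto simp: sigma_def swap_adj_def Sigma_iff red_Cons cons_red_def linv_def)
    next
      case False
      then show ?thesis by (intro bexI[of _ "[]"]) (auto simp: sigma_def swap_adj_def Sigma_iff)
    qed
  qed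
qed (simp_all add: sigma_sigma_inv sigma_inv_sigma)

lemma sigma_inv_Bn:
  assumes "1 \<le> i" "i + 1 \<le> n"
  shows "sigma_inv i \<in> Bn n"
proof (rule Bn_intro[OF sigma_inv_Sigma[OF assms] sigma_Sigma[OF assms] _ _ sigma_inv_z1[OF assms]
        swap_adj_bij[OF assms]])
  show "\<forall>k\<in>{1..n}. \<exists>h\<in>Sigma n. sigma_inv i k = red (h @ [(swap_adj i k, True)] @ winv h)"
  proof
    fix k assume "k \<in> {1..n}"
    show "\<exists>h\<in>Sigma n. sigma_inv i k = red (h @ [(swap_adj i k, True)] @ winv h)"
    proof (cases "k = i")
      case True
      then show ?thesis using assms
        by (intro bexI[of _ "[(i, True)]"]) (auto simp: sigma_inv_def swap_adj_def Sigma_iff red_Cons cons_red_def linv_def)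
    next
      case False
      then show ?thesis by (intro bexI[of _ "[]"]) (auto simp: sigma_inv_def swap_adj_def Sigma_iff)
    qed
  qed
qed (simp_all add: sigma_sigma_inv sigma_inv_sigma)

lemma sigma_pow_Bn: "1 \<le> i \<Longrightarrow> i + 1 \<le> n \<Longrightarrow> sigma_pow i e \<in> Bn n"
  by (simp add: sigma_pow_def sigma_Bn sigma_inv_Bn)

lemma sigma_pow_inverse: "e \<in> {1::int, -1} \<Longrightarrow> comp_aut (sigma_pow i (-e)) (sigma_pow i e) = gen"
  by (auto simp: sigma_pow_def sigma_sigma_inv sigma_inv_sigma)

lemma comp_id_right: "(\<And>k. reduced (f k)) \<Longrightarrow> comp_aut f id_aut = f"
  by (rule ext) (simp add: comp_aut_def id_aut_def app_gen red_reduced)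

lemma comp_id_left: "(\<And>k. reduced (f k)) \<Longrightarrow> comp_aut id_aut f = f"
  by (rule ext) (simp add: comp_aut_def id_aut_def gen_def app_single red_reduced)

lemma reduced_sigma_pow: "reduced (sigma_pow i e k)"
  by (auto simp: sigma_pow_def sigma_def sigma_inv_def linv_def)

lemma foldl_comp_sigma_pow:
  "(\<And>k. reduced (f k)) \<Longrightarrow>
    foldl (\<lambda>acc p. comp_aut acc (sigma_pow (fst p) (snd p))) f L = comp_aut f (sigma_word L)"
proof (induction L arbitrary: f)
  case Nil
  then show ?case by (simp add: sigma_word_def comp_id_right)
next
  case (Cons p L)
  let ?s = "sigma_pow (fst p) (snd p)"
  have "reduced (comp_aut f ?s k)" for k
    by (simp add: comp_aut_def app_img)
  then have "foldl (\<lambda>acc p. comp_aut acc (sigma_pow (fst p) (snd p))) f (p # L)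
      = comp_aut f (comp_aut ?s (sigma_word L))"
    using Cons.IH by (simp add: comp_assoc)
  moreover have "sigma_word (p # L) = comp_aut ?s (sigma_word L)"
    using Cons.IH[of ?s] by (simp add: sigma_word_def comp_id_left reduced_sigma_pow)
  ultimately show ?case by simp
qed

lemma sigma_word_Cons: "sigma_word (p # L) = comp_aut (sigma_pow (fst p) (snd p)) (sigma_word L)"
  using foldl_comp_sigma_pow[of "sigma_pow (fst p) (snd p)" L]
  by (simp add: sigma_word_def comp_id_left reduced_sigma_pow)

lemma sigma_word_Bn: "(\<forall>p\<in>set L. fst p \<in> {1..<n} \<and> snd p \<in> {1, -1}) \<Longrightarrow> sigma_word L \<in> Bn n"
proof (induction L)
  case Nil
  then show ?case by (simp add: sigma_word_def id_Bn)
next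
  case (Cons p L)
  then show ?case by (auto simp: sigma_word_Cons intro!: Bn_comp sigma_pow_Bn)
qed

(* Second half of the theorem, by induction on the norm: if sigma_i^e phi = w then
   phi = sigma_i^(-e) w. *)
lemma Bn_sigma_word:
  assumes "1 \<le> n" "\<phi> \<in> Bn n"
  shows "\<exists>L. (\<forall>p\<in>set L. fst p \<in> {1..<n} \<and> snd p \<in> {1, -1}) \<and> aut_eq n \<phi> (sigma_word L)"
  using assms(2)
proof (induction "norm_aut n \<phi>" arbitrary: \<phi> rule: less_induct)
  case less
  show ?case
  proof (cases "aut_eq n \<phi> id_aut")
    case True
    then show ?thesis by (intro exI[of _ "[]"]) (simp add: sigma_word_def)
  next
    case False
    obtain i e where ie: "i \<in> {1..<n}" "e \<in> {1::int, -1}"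
      and shorter: "norm_aut n (comp_aut (sigma_pow i e) \<phi>) + 2 \<le> norm_aut n \<phi>"
      using Bn_norm_reduction[OF assms(1) less.prems False] by blast
    have i: "1 \<le> i" "i + 1 \<le> n" using ie by auto
    define \<psi> where "\<psi> = comp_aut (sigma_pow i e) \<phi>"
    have "\<psi> \<in> Bn n" unfolding \<psi>_def by (rule Bn_comp[OF sigma_pow_Bn[OF i] less.prems])
    then obtain L where L: "\<forall>p\<in>set L. fst p \<in> {1..<n} \<and> snd p \<in> {1, -1}" "aut_eq n \<psi> (sigma_word L)"
      using less.hyps[of \<psi>] shorter \<psi>_def by fastforce
    have "\<phi> k = sigma_word ((i, -e) # L) k" if k: "k \<in> {1..n}" for k
    proof -
      have letters: "\<forall>x\<in>set (sigma_pow i (-e) k). fst x \<in> {1..n}"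
        using sigma_pow_Bn[OF i] Bn_Sigma k letters_Sigma by blast
      have "sigma_word ((i, -e) # L) k = app (sigma_word L) (sigma_pow i (-e) k)"
        by (simp add: sigma_word_Cons comp_aut_def)
      also have "\<dots> = app \<psi> (sigma_pow i (-e) k)"
        using L(2) letters by (intro app_cong) (auto simp: aut_eq_def)
      also have "\<dots> = app \<phi> (app (sigma_pow i e) (sigma_pow i (-e) k))"
        by (simp add: \<psi>_def app_comp)
      also have "app (sigma_pow i e) (sigma_pow i (-e) k) = gen k"
        using sigma_pow_inverse[OF ie(2), of i] by (metis comp_aut_def)
      also have "app \<phi> (gen k) = \<phi> k"
        using Bn_Sigma[OF less.prems] k by (simp add: gen_def app_single red_reduced Sigma_iff)
      finally show ?thesis by simp
    qed
    then show ?thesis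
      using L(1) ie by (intro exI[of _ "(i, -e) # L"]) (auto simp: aut_eq_def)
  qed
qed

theorem proposition3p3:
  fixes n :: nat
  assumes "n \<ge> 1"
  shows "(\<forall>\<phi>\<in>Bn n. \<not> aut_eq n \<phi> id_aut \<longrightarrow>
            (\<exists>i\<in>{1..<n}. \<exists>e\<in>{1::int, -1}.
               norm_aut n (comp_aut (sigma_pow i e) \<phi>) + 2 \<le> norm_aut n \<phi>))
       \<and> (\<forall>\<phi>. \<phi> \<in> Bn n \<longleftrightarrow>
            (\<exists>L. (\<forall>p\<in>set L. fst p \<in> {1..<n} \<and> snd p \<in> {1, -1}) \<and> aut_eq n \<phi> (sigma_word L)))"
proof (intro conjI ballI impI allI iffI)
  fix \<phi> assume "\<phi> \<in> Bn n" "\<not> aut_eq n \<phi> id_aut"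
  then show "\<exists>i\<in>{1..<n}. \<exists>e\<in>{1::int, -1}. norm_aut n (comp_aut (sigma_pow i e) \<phi>) + 2 \<le> norm_aut n \<phi>"
    using Bn_norm_reduction assms by blast
next
  fix \<phi> :: "nat \<Rightarrow> word" assume "\<phi> \<in> Bn n"
  then show "\<exists>L. (\<forall>p\<in>set L. fst p \<in> {1..<n} \<and> snd p \<in> {1, -1}) \<and> aut_eq n \<phi> (sigma_word L)"
    using Bn_sigma_word assms by blast
next
  fix \<phi> :: "nat \<Rightarrow> word"
  assume "\<exists>L. (\<forall>p\<in>set L. fst p \<in> {1..<n} \<and> snd p \<in> {1, -1}) \<and> aut_eq n \<phi> (sigma_word L)"
  then show "\<phi> \<in> Bn n" using Bn_cong sigma_word_Bn by blast
qed

end
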